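(* Let $\mathbb{P} = \mathbb{P}(c_1,c_2,c_3,c_4)$ be a weighted projective space with homogeneous coordinates $s_1,s_2,s_3,s_4$, and suppose $c_1 \ge c_2$ and $c_1 > c_i$ for $i=3,4$. Let $g_1,g_2 \in \mathbb{C}[s_3,s_4]$ be homogeneous of degree $c_1+c_2$, and suppose there is an automorphism $\sigma$ of $\mathbb{P}$ inducing an isomorphism \[ \sigma|_{H_1}\colon H_1 := (s_1 s_2 + g_1(s_3,s_4) = 0) \xrightarrow{\ \cong\ } H_2 := (s_1 s_2 + g_2(s_3,s_4) = 0) \] between these weighted hypersurfaces in $\mathbb{P}$. Then there is an automorphism $\tau$ of $\mathbb{P}(c_3,c_4)$ (with coordinates $s_3,s_4$) such that $g_1 = \tau^* g_2$. *)

theory Defs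
  imports Complex_Main
begin

text \<open>Points of the affine cone over a weighted projective space with coordinates
  indexed by a finite set V of variables are represented as functions
  x :: nat \<Rightarrow> complex, with x i = 0 for i outside V.\<close>

definition cone_pts :: "nat set \<Rightarrow> (nat \<Rightarrow> complex) set" where
  "cone_pts V = {x. \<forall>i. i \<notin> V \<longrightarrow> x i = 0}"

definition wt_hom_poly ::
  "nat set \<Rightarrow> (nat \<Rightarrow> nat) \<Rightarrow> nat \<Rightarrow> ((nat \<Rightarrow> complex) \<Rightarrow> complex) \<Rightarrow> bool" where
  "wt_hom_poly V w d f \<longleftrightarrow>
     (\<exists>a :: (nat \<Rightarrow> nat) \<Rightarrow> complex.
        finite {e. a e \<noteq> 0} \<and>
        (\<forall>e. a e \<noteq> 0 \<longrightarrow> (\<forall>i. i \<notin> V \<longrightarrow> e i = 0) \<and> (\<Sum>i\<in>V. w i * e i) = d) \<and>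
        (\<forall>x. f x = (\<Sum>e\<in>{e. a e \<noteq> 0}. a e * (\<Prod>i\<in>V. x i ^ e i))))"

definition graded_map :: "nat set \<Rightarrow> (nat \<Rightarrow> nat) \<Rightarrow> ((nat \<Rightarrow> complex) \<Rightarrow> (nat \<Rightarrow> complex)) \<Rightarrow> bool" where
  "graded_map V w \<phi> \<longleftrightarrow>
     (\<forall>i\<in>V. wt_hom_poly V w (w i) (\<lambda>x. \<phi> x i)) \<and> (\<forall>x i. i \<notin> V \<longrightarrow> \<phi> x i = 0)"

text \<open>An automorphism of the weighted projective space P(w_i : i in V), given (as
  usual) by a graded automorphism of its homogeneous coordinate ring, i.e. an
  invertible graded map whose inverse is again graded.\<close>

definition wps_aut :: "nat set \<Rightarrow> (nat \<Rightarrow> nat) \<Rightarrow> ((nat \<Rightarrow> complex) \<Rightarrow> (nat \<Rightarrow> complex)) \<Rightarrow> bool" where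
  "wps_aut V w \<phi> \<longleftrightarrow> graded_map V w \<phi> \<and>
     (\<exists>\<psi>. graded_map V w \<psi> \<and>
        (\<forall>x\<in>cone_pts V. \<psi> (\<phi> x) = x \<and> \<phi> (\<psi> x) = x))"

end

theory Submission
  imports Defs "HOL-Combinatorics.Transposition"
begin

text \<open>A graded automorphism \<sigma> preserves degrees, so its s3- and s4-components do not involve s1
  (as c3, c4 < c1) and its s1- and s2-components are affine in s1.  At the point (1,0,0,0) the
  isomorphism forces the product of the two s1-coefficients to vanish, so one of \<sigma>1, \<sigma>2 does
  not involve s1; swapping s1 and s2 if necessary (this happens only when c1 = c2), \<sigma>2 does not.
  Let \<alpha> be the s1-coefficient of \<sigma>1; it is nonzero as \<sigma> is injective.  Replacing x1 by t, the
  isomorphism compares the zero set in t of t x2 + g1 with that of (h + \<alpha> t) \<sigma>2 + g2(\<sigma>); this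
  gives \<sigma>2 = \<beta> s2 with \<beta> \<noteq> 0 and, at the root t = -g1/x2, the identity g2(\<sigma>(x)) = \<alpha> \<beta> g1(x) for
  x1 = 0, x2 \<noteq> 0, hence for x2 = 0 by continuity.  So \<sigma> restricted to the coordinates s3, s4 is
  an automorphism of P(c3,c4) pulling g2 back to \<alpha> \<beta> g1, and rescaling by a (c1+c2)-th root of
  1/(\<alpha> \<beta>) removes the constant.\<close>

definition cone_restrict :: "nat set \<Rightarrow> (nat \<Rightarrow> complex) \<Rightarrow> nat \<Rightarrow> complex" where
  "cone_restrict W x = (\<lambda>i. if i \<in> W then x i else 0)"

lemma cone_restrict_in_cone_pts: "W \<subseteq> V \<Longrightarrow> cone_restrict W x \<in> cone_pts V"
  unfolding cone_restrict_def cone_pts_def by auto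

lemma cone_pts_fun_upd: "x \<in> cone_pts V \<Longrightarrow> j \<in> V \<Longrightarrow> x(j := t) \<in> cone_pts V"
  unfolding cone_pts_def by auto

lemma wt_hom_polyE:
  assumes "wt_hom_poly V w d f"
  obtains a where "finite {e. a e \<noteq> 0}"
    and "\<And>e. a e \<noteq> 0 \<Longrightarrow> (\<forall>i. i \<notin> V \<longrightarrow> e i = 0) \<and> (\<Sum>i\<in>V. w i * e i) = d"
    and "\<And>x. f x = (\<Sum>e\<in>{e. a e \<noteq> 0}. a e * (\<Prod>i\<in>V. x i ^ e i))"
  using assms unfolding wt_hom_poly_def by blast

lemma wt_hom_poly_cong:
  assumes "wt_hom_poly V w d f" and "\<And>i. i \<in> V \<Longrightarrow> x i = y i"
  shows "f x = f y"
proof -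
  obtain a where "finite {e. a e \<noteq> 0}"
    and "\<And>e. a e \<noteq> 0 \<Longrightarrow> (\<forall>i. i \<notin> V \<longrightarrow> e i = 0) \<and> (\<Sum>i\<in>V. w i * e i) = d"
    and f: "\<And>x. f x = (\<Sum>e\<in>{e. a e \<noteq> 0}. a e * (\<Prod>i\<in>V. x i ^ e i))"
    using assms(1) by (rule wt_hom_polyE) (rule that)
  show ?thesis
    unfolding f by (intro sum.cong refl arg_cong[where f = "(*) _"] prod.cong) (simp add: assms(2))
qed

lemma wt_hom_poly_weighted_scale:
  assumes "wt_hom_poly V w d f" and "finite V"
  shows "f (\<lambda>i. t ^ w i * x i) = t ^ d * f x"
proof -
  obtain a where "finite {e. a e \<noteq> 0}"
    and deg: "\<And>e. a e \<noteq> 0 \<Longrightarrow> (\<forall>i. i \<notin> V \<longrightarrow> e i = 0) \<and> (\<Sum>i\<in>V. w i * e i) = d"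
    and f: "\<And>x. f x = (\<Sum>e\<in>{e. a e \<noteq> 0}. a e * (\<Prod>i\<in>V. x i ^ e i))"
    using assms(1) by (rule wt_hom_polyE) (rule that)
  have "(\<Prod>i\<in>V. (t ^ w i * x i) ^ e i) = t ^ d * (\<Prod>i\<in>V. x i ^ e i)" if "a e \<noteq> 0" for e
  proof -
    have "(\<Prod>i\<in>V. (t ^ w i * x i) ^ e i) = (\<Prod>i\<in>V. t ^ (w i * e i)) * (\<Prod>i\<in>V. x i ^ e i)"
      by (simp add: power_mult_distrib power_mult prod.distrib)
    also have "(\<Prod>i\<in>V. t ^ (w i * e i)) = t ^ d"
      using deg[OF that] by (simp add: power_sum[symmetric])
    finally show ?thesis .
  qed
  then show ?thesis
    unfolding f sum_distrib_left by (intro sum.cong) auto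
qed

lemma wt_hom_poly_vanishes:
  assumes "wt_hom_poly V w d f" and "finite V" and "0 < d" and "\<And>i. i \<in> V \<Longrightarrow> x i = 0"
  shows "f x = 0"
proof -
  have "f x = f (\<lambda>i. 0 ^ w i * x i)"
    using assms(4) by (intro wt_hom_poly_cong[OF assms(1)]) (simp add: power_0_left)
  also have "\<dots> = 0 ^ d * f x"
    using assms(1,2) by (rule wt_hom_poly_weighted_scale)
  finally show ?thesis
    using assms(3) by (simp add: power_0_left)
qed

lemma wt_hom_poly_cmult:
  assumes "wt_hom_poly V w d f"
  shows "wt_hom_poly V w d (\<lambda>x. k * f x)"
proof (cases "k = 0")
  case True
  then show ?thesis unfolding wt_hom_poly_def by (intro exI[of _ "\<lambda>e. 0"]) auto
next
  case False
  obtain a where "finite {e. a e \<noteq> 0}"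
    and "\<And>e. a e \<noteq> 0 \<Longrightarrow> (\<forall>i. i \<notin> V \<longrightarrow> e i = 0) \<and> (\<Sum>i\<in>V. w i * e i) = d"
    and "\<And>x. f x = (\<Sum>e\<in>{e. a e \<noteq> 0}. a e * (\<Prod>i\<in>V. x i ^ e i))"
    using assms by (rule wt_hom_polyE) (rule that)
  with False show ?thesis unfolding wt_hom_poly_def
    by (intro exI[of _ "\<lambda>e. k * a e"]) (auto simp: sum_distrib_left mult.assoc)
qed

lemma continuous_wt_hom_poly:
  assumes "wt_hom_poly V w d f" and "\<And>i. i \<in> V \<Longrightarrow> continuous F (\<lambda>t. u t i)"
  shows "continuous F (\<lambda>t. f (u t))"
proof -
  obtain a where "finite {e. a e \<noteq> 0}"
    and "\<And>e. a e \<noteq> 0 \<Longrightarrow> (\<forall>i. i \<notin> V \<longrightarrow> e i = 0) \<and> (\<Sum>i\<in>V. w i * e i) = d"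
    and f: "\<And>x. f x = (\<Sum>e\<in>{e. a e \<noteq> 0}. a e * (\<Prod>i\<in>V. x i ^ e i))"
    using assms(1) by (rule wt_hom_polyE) (rule that)
  show ?thesis
    unfolding f using assms(2) by (intro continuous_intros) auto
qed

lemma wt_hom_poly_cone_restrict:
  assumes "wt_hom_poly V w d f" and "W \<subseteq> V" and "finite V"
  shows "wt_hom_poly W w d (\<lambda>x. f (cone_restrict W x))"
proof -
  obtain a where fin: "finite {e. a e \<noteq> 0}"
    and deg: "\<And>e. a e \<noteq> 0 \<Longrightarrow> (\<forall>i. i \<notin> V \<longrightarrow> e i = 0) \<and> (\<Sum>i\<in>V. w i * e i) = d"
    and f: "\<And>x. f x = (\<Sum>e\<in>{e. a e \<noteq> 0}. a e * (\<Prod>i\<in>V. x i ^ e i))"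
    using assms(1) by (rule wt_hom_polyE) (rule that)
  define supported where "supported e \<longleftrightarrow> (\<forall>i. i \<notin> W \<longrightarrow> e i = 0)" for e :: "nat \<Rightarrow> nat"
  define a' where "a' e = (if supported e then a e else 0)" for e
  have supp: "{e. a' e \<noteq> 0} = {e. a e \<noteq> 0} \<inter> Collect supported"
    unfolding a'_def by auto
  have restrict_V: "(\<Prod>i\<in>V. g i ^ e i) = (\<Prod>i\<in>W. g i ^ e i)"
    "(\<Sum>i\<in>V. w i * e i) = (\<Sum>i\<in>W. w i * e i)" if "supported e" for e and g :: "nat \<Rightarrow> complex"
    using that assms(2,3) unfolding supported_def
    by (auto intro: prod.mono_neutral_right sum.mono_neutral_right)
  have monomial: "a e * (\<Prod>i\<in>V. cone_restrict W x i ^ e i) = a' e * (\<Prod>i\<in>W. x i ^ e i)"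
    if "a e \<noteq> 0" for e x
  proof (cases "supported e")
    case True
    then show ?thesis
      unfolding restrict_V(1)[OF True] a'_def by (simp add: cone_restrict_def)
  next
    case False
    then obtain j where "j \<notin> W" "e j \<noteq> 0" unfolding supported_def by auto
    moreover from this have "j \<in> V" using deg[OF that] by auto
    ultimately have "(\<Prod>i\<in>V. cone_restrict W x i ^ e i) = 0"
      using assms(3) by (intro prod_zero) (auto simp: cone_restrict_def)
    then show ?thesis using False unfolding a'_def by simp
  qed
  have "f (cone_restrict W x) = (\<Sum>e\<in>{e. a' e \<noteq> 0}. a' e * (\<Prod>i\<in>W. x i ^ e i))" for x
  proof -
    have "f (cone_restrict W x) = (\<Sum>e\<in>{e. a e \<noteq> 0}. a' e * (\<Prod>i\<in>W. x i ^ e i))"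
      unfolding f using monomial by (intro sum.cong) auto
    also have "\<dots> = (\<Sum>e\<in>{e. a' e \<noteq> 0}. a' e * (\<Prod>i\<in>W. x i ^ e i))"
      using fin unfolding supp by (intro sum.mono_neutral_right) (auto simp: a'_def)
    finally show ?thesis .
  qed
  moreover have "(\<forall>i. i \<notin> W \<longrightarrow> e i = 0) \<and> (\<Sum>i\<in>W. w i * e i) = d" if "a' e \<noteq> 0" for e
  proof -
    from that have "supported e" "a e \<noteq> 0" unfolding a'_def by (auto split: if_splits)
    then show ?thesis using deg[of e] restrict_V(2)[of e] unfolding supported_def by simp
  qed
  ultimately show ?thesis
    unfolding wt_hom_poly_def using fin supp by (intro exI[of _ a']) auto
qed

lemma wt_hom_poly_permute:
  assumes "wt_hom_poly V w d f"
    and inv: "\<And>i. s (s i) = i" and sV: "\<And>i. s i \<in> V \<longleftrightarrow> i \<in> V" and ws: "\<And>i. w (s i) = w i"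
  shows "wt_hom_poly V w d (\<lambda>x. f (x \<circ> s))"
proof -
  obtain a where fin: "finite {e. a e \<noteq> 0}"
    and deg: "\<And>e. a e \<noteq> 0 \<Longrightarrow> (\<forall>i. i \<notin> V \<longrightarrow> e i = 0) \<and> (\<Sum>i\<in>V. w i * e i) = d"
    and f: "\<And>x. f x = (\<Sum>e\<in>{e. a e \<noteq> 0}. a e * (\<Prod>i\<in>V. x i ^ e i))"
    using assms(1) by (rule wt_hom_polyE) (rule that)
  have s_bij: "bij_betw s V V"
    using inv sV by (intro bij_betw_byWitness[of V s s]) auto
  have comp_s_comp_s: "g \<circ> s \<circ> s = g" for g :: "nat \<Rightarrow> 'a"
    using inv by (simp add: fun_eq_iff)
  define a' where "a' e = a (e \<circ> s)" for e
  have supp: "{e. a' e \<noteq> 0} = (\<lambda>e. e \<circ> s) ` {e. a e \<noteq> 0}"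
    unfolding a'_def
  proof (intro set_eqI iffI)
    fix e assume "e \<in> {e. a (e \<circ> s) \<noteq> 0}"
    then show "e \<in> (\<lambda>e. e \<circ> s) ` {e. a e \<noteq> 0}"
      by (intro image_eqI[of _ _ "e \<circ> s"]) (simp_all add: comp_s_comp_s)
  qed (auto simp: comp_s_comp_s)
  have inj: "inj (\<lambda>e :: nat \<Rightarrow> nat. e \<circ> s)"
    using comp_s_comp_s by (metis injI)
  have "f (x \<circ> s) = (\<Sum>e\<in>{e. a' e \<noteq> 0}. a' e * (\<Prod>i\<in>V. x i ^ e i))" for x
  proof -
    have "(\<Prod>i\<in>V. x i ^ (e \<circ> s) i) = (\<Prod>i\<in>V. (x \<circ> s) i ^ e i)" for e
      using prod.reindex_bij_betw[OF s_bij, of "\<lambda>i. x i ^ (e \<circ> s) i"] inv by simp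
    then show ?thesis
      unfolding supp sum.reindex[OF inj_on_subset[OF inj subset_UNIV]] f
      by (simp add: a'_def comp_s_comp_s)
  qed
  moreover have "(\<forall>i. i \<notin> V \<longrightarrow> e i = 0) \<and> (\<Sum>i\<in>V. w i * e i) = d" if "a' e \<noteq> 0" for e
  proof -
    have "(\<Sum>i\<in>V. w i * e i) = (\<Sum>i\<in>V. w i * (e \<circ> s) i)"
      using sum.reindex_bij_betw[OF s_bij, of "\<lambda>i. w i * e i"] ws by simp
    then show ?thesis
      using deg[of "e \<circ> s"] that sV inv unfolding a'_def by (metis comp_apply)
  qed
  ultimately show ?thesis
    unfolding wt_hom_poly_def using fin supp by (intro exI[of _ a']) auto
qed

lemma unit_exponent_if_weighted_degree_le:
  fixes e :: "nat \<Rightarrow> nat"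
  assumes "finite V" and "j \<in> V" and pos: "\<forall>i\<in>V. 0 < w i"
    and le: "(\<Sum>i\<in>V. w i * e i) \<le> w j" and "e j \<noteq> 0" and supp: "\<And>i. i \<notin> V \<Longrightarrow> e i = 0"
  shows "e = (\<lambda>i. if i = j then 1 else 0)"
proof -
  have split: "(\<Sum>i\<in>V. w i * e i) = w j * e j + (\<Sum>i\<in>V - {j}. w i * e i)"
    using assms(1,2) by (simp add: sum.remove)
  have "w j * 1 \<le> w j * e j"
    using \<open>e j \<noteq> 0\<close> by (intro mult_le_mono2) simp
  then have "w j * e j \<le> w j * 1" and rest: "(\<Sum>i\<in>V - {j}. w i * e i) = 0"
    using le split by linarith+
  then have "e j = 1"
    using \<open>e j \<noteq> 0\<close> pos assms(2) by simp
  moreover have "e i = 0" if "i \<in> V" "i \<noteq> j" for i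
  proof -
    have "w i * e i = 0"
      using rest that assms(1) by auto
    then show ?thesis using pos that(1) by fastforce
  qed
  ultimately show ?thesis
    using supp by (auto simp: fun_eq_iff)
qed

lemma wt_hom_poly_affine_in_var:
  assumes "wt_hom_poly V w d f" and "finite V" and "j \<in> V"
    and pos: "\<forall>i\<in>V. 0 < w i" and "d \<le> w j"
  shows "\<exists>b. (d < w j \<longrightarrow> b = 0) \<and> (\<forall>x. f x = f (x(j := 0)) + b * x j)"
proof -
  obtain a where fin: "finite {e. a e \<noteq> 0}"
    and deg: "\<And>e. a e \<noteq> 0 \<Longrightarrow> (\<forall>i. i \<notin> V \<longrightarrow> e i = 0) \<and> (\<Sum>i\<in>V. w i * e i) = d"
    and f: "\<And>x. f x = (\<Sum>e\<in>{e. a e \<noteq> 0}. a e * (\<Prod>i\<in>V. x i ^ e i))"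
    using assms(1) by (rule wt_hom_polyE) (rule that)
  define \<delta> :: "nat \<Rightarrow> nat" where "\<delta> i = (if i = j then 1 else 0)" for i
  have deg_\<delta>: "(\<Sum>i\<in>V. w i * \<delta> i) = w j"
    using assms(2,3) by (simp add: \<delta>_def if_distrib cong: if_cong)
  have monomial:
    "a e * (\<Prod>i\<in>V. x i ^ e i) = a e * (\<Prod>i\<in>V. (x(j := 0)) i ^ e i) + (if e = \<delta> then a \<delta> * x j else 0)"
    if "a e \<noteq> 0" for e x
  proof (cases "e j = 0")
    case True
    then have "e \<noteq> \<delta>" by (auto simp: \<delta>_def fun_eq_iff)
    moreover have "(\<Prod>i\<in>V. x i ^ e i) = (\<Prod>i\<in>V. (x(j := 0)) i ^ e i)"
      using True by (intro prod.cong) auto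
    ultimately show ?thesis by simp
  next
    case False
    have e: "e = \<delta>"
      unfolding \<delta>_def
    proof (rule unit_exponent_if_weighted_degree_le[OF assms(2,3)])
      show "(\<Sum>i\<in>V. w i * e i) \<le> w j" and "\<And>i. i \<notin> V \<Longrightarrow> e i = 0"
        using deg[OF that] assms(5) by simp_all
    qed (use False pos in simp_all)
    have "(\<Prod>i\<in>V. x i ^ \<delta> i) = x j" and "(\<Prod>i\<in>V. (x(j := 0)) i ^ \<delta> i) = 0"
      using assms(2,3) by (simp_all add: \<delta>_def if_distrib cong: if_cong)
    then show ?thesis by (simp add: e)
  qed
  have "f x = f (x(j := 0)) + a \<delta> * x j" for x
  proof -
    have "f x = (\<Sum>e\<in>{e. a e \<noteq> 0}.
              a e * (\<Prod>i\<in>V. (x(j := 0)) i ^ e i) + (if e = \<delta> then a \<delta> * x j else 0))"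
      unfolding f by (intro sum.cong refl monomial) simp
    also have "\<dots> = f (x(j := 0)) + a \<delta> * x j"
      unfolding f sum.distrib using fin by (simp add: sum.delta')
    finally show ?thesis .
  qed
  moreover have "d < w j \<Longrightarrow> a \<delta> = 0"
    using deg[of \<delta>] deg_\<delta> by auto
  ultimately show ?thesis
    by blast
qed

lemma wt_hom_poly_indep_var:
  assumes "wt_hom_poly V w d f" and "finite V" and "j \<in> V"
    and "\<forall>i\<in>V. 0 < w i" and "d < w j"
  shows "f x = f (x(j := 0))"
  using wt_hom_poly_affine_in_var[OF assms(1-4) less_imp_le[OF assms(5)]] assms(5) by auto

lemma graded_map_in_cone_pts: "graded_map V w \<phi> \<Longrightarrow> \<phi> x \<in> cone_pts V"
  unfolding graded_map_def cone_pts_def by blast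

lemma wps_aut_inj_on: "wps_aut V w \<phi> \<Longrightarrow> inj_on \<phi> (cone_pts V)"
  unfolding wps_aut_def by (metis inj_on_inverseI)

lemma wps_aut_weighted_scale:
  assumes "wps_aut V w \<phi>" and "finite V" and "t \<noteq> 0"
  shows "wps_aut V w (\<lambda>x i. t ^ w i * \<phi> x i)"
proof -
  obtain \<psi> where \<phi>: "graded_map V w \<phi>" and \<psi>: "graded_map V w \<psi>"
    and \<psi>\<phi>: "\<forall>x\<in>cone_pts V. \<psi> (\<phi> x) = x \<and> \<phi> (\<psi> x) = x"
    using assms(1) unfolding wps_aut_def by blast
  define \<psi>' where "\<psi>' y = \<psi> (\<lambda>i. inverse t ^ w i * y i)" for y
  have \<psi>'_component: "(\<lambda>y. \<psi>' y i) = (\<lambda>y. inverse t ^ w i * \<psi> y i)" if "i \<in> V" for i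
    using wt_hom_poly_weighted_scale[OF _ assms(2)] \<psi> that
    unfolding \<psi>'_def graded_map_def by blast
  have \<phi>': "graded_map V w (\<lambda>x i. t ^ w i * \<phi> x i)" and \<psi>': "graded_map V w \<psi>'"
    using \<phi> \<psi> \<psi>'_component unfolding graded_map_def
    by (auto simp: \<psi>'_def intro: wt_hom_poly_cmult)
  have cancel: "inverse t ^ k * (t ^ k * z) = z" "t ^ k * (inverse t ^ k * z) = z" for k z
    using assms(3) by (simp_all add: mult.assoc[symmetric] power_mult_distrib[symmetric])
  have inverse: "\<psi>' (\<lambda>i. t ^ w i * \<phi> x i) = x \<and> (\<lambda>i. t ^ w i * \<phi> (\<psi>' x) i) = x"
    if "x \<in> cone_pts V" for x
  proof -
    have "(\<lambda>i. inverse t ^ w i * x i) \<in> cone_pts V"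
      using that unfolding cone_pts_def by simp
    then show ?thesis
      using \<psi>\<phi> that by (simp add: \<psi>'_def cancel)
  qed
  show ?thesis
    unfolding wps_aut_def using \<phi>' \<psi>' inverse by blast
qed

lemma wps_aut_permute:
  assumes "wps_aut V w \<phi>"
    and inv: "\<And>i. s (s i) = i" and sV: "\<And>i. s i \<in> V \<longleftrightarrow> i \<in> V" and ws: "\<And>i. w (s i) = w i"
  shows "wps_aut V w (\<lambda>x. \<phi> x \<circ> s)"
proof -
  obtain \<psi> where \<phi>: "graded_map V w \<phi>" and \<psi>: "graded_map V w \<psi>"
    and \<psi>\<phi>: "\<forall>x\<in>cone_pts V. \<psi> (\<phi> x) = x \<and> \<phi> (\<psi> x) = x"
    using assms(1) unfolding wps_aut_def by blast
  have comp_s_comp_s: "g \<circ> s \<circ> s = g" for g :: "nat \<Rightarrow> complex"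
    using inv by (simp add: fun_eq_iff)
  have \<phi>': "graded_map V w (\<lambda>x. \<phi> x \<circ> s)"
    using \<phi> sV ws unfolding graded_map_def comp_def by force
  have \<psi>': "graded_map V w (\<lambda>y. \<psi> (y \<circ> s))"
    unfolding graded_map_def
  proof (intro conjI ballI allI impI)
    fix i assume "i \<in> V"
    then show "wt_hom_poly V w (w i) (\<lambda>y. \<psi> (y \<circ> s) i)"
      using wt_hom_poly_permute[of V w "w i" "\<lambda>x. \<psi> x i" s] \<psi> inv sV ws
      unfolding graded_map_def by simp
  next
    fix y i assume "i \<notin> V"
    then show "\<psi> (y \<circ> s) i = 0"
      using \<psi> unfolding graded_map_def by simp
  qed
  have inverse: "\<psi> (\<phi> x \<circ> s \<circ> s) = x \<and> \<phi> (\<psi> (x \<circ> s)) \<circ> s = x" if "x \<in> cone_pts V" for x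
  proof -
    have "x \<circ> s \<in> cone_pts V"
      using that sV unfolding cone_pts_def by simp
    then show ?thesis
      using \<psi>\<phi> that by (simp add: comp_s_comp_s)
  qed
  show ?thesis
    unfolding wps_aut_def using \<phi>' \<psi>' inverse by blast
qed

lemma slope_eq_0_if_zero_set_const:
  fixes m k :: "'a :: field"
  assumes "\<And>t. m * t + k = 0 \<longleftrightarrow> P"
  shows "m = 0"
proof (rule ccontr)
  assume "m \<noteq> 0"
  then have "m * (- k / m) + k = 0" and "m * ((1 - k) / m) + k \<noteq> 0"
    by simp_all
  then show False
    using assms by blast
qed

lemma continuous_at_imp_eq_if_eq_off_point:
  fixes \<phi> :: "'a :: {t2_space, perfect_space} \<Rightarrow> 'b :: t2_space"
  assumes "continuous (at z) \<phi>" and "\<And>t. t \<noteq> z \<Longrightarrow> \<phi> t = c"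
  shows "\<phi> z = c"
proof -
  have "(\<phi> \<longlongrightarrow> \<phi> z) (at z)"
    using assms(1) by (simp add: continuous_at)
  moreover have "(\<phi> \<longlongrightarrow> c) (at z)"
    by (rule tendsto_eventually) (auto simp: eventually_at_filter assms(2))
  ultimately show ?thesis
    by (rule tendsto_unique[OF at_neq_bot])
qed

lemma complex_root_exists:
  assumes "0 < n"
  obtains t :: complex where "t ^ n = z"
proof (cases "z = 0")
  case True
  with assms show ?thesis by (intro that[of 0]) simp
next
  case False
  let ?c = "root n (norm z) * cis (Arg z / n)"
  have "(*) ?c ` {t. t ^ n = 1} = {t. t ^ n = z}"
    using bij_betw_imp_surj_on[OF bij_betw_nth_root_unity[OF False assms]] .
  moreover have "(1::complex) \<in> {t. t ^ n = 1}"
    by simp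
  ultimately have "?c * 1 \<in> {t. t ^ n = z}"
    by (metis imageI)
  then show ?thesis
    by (intro that[of ?c]) simp
qed

locale hypersurface_iso =
  fixes c :: "nat \<Rightarrow> nat"
    and g1 g2 :: "(nat \<Rightarrow> complex) \<Rightarrow> complex"
    and \<sigma> :: "(nat \<Rightarrow> complex) \<Rightarrow> nat \<Rightarrow> complex"
  assumes pos: "\<forall>i\<in>{1,2,3,4}. c i > 0"
    and c12: "c 1 \<ge> c 2" and c13: "c 1 > c 3" and c14: "c 1 > c 4"
    and g1: "wt_hom_poly {3,4} c (c 1 + c 2) g1"
    and g2: "wt_hom_poly {3,4} c (c 1 + c 2) g2"
    and aut: "wps_aut {1,2,3,4} c \<sigma>"
    and iso: "\<forall>x\<in>cone_pts {1,2,3,4}.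
               (x 1 * x 2 + g1 x = 0) \<longleftrightarrow> ((\<sigma> x) 1 * (\<sigma> x) 2 + g2 (\<sigma> x) = 0)"
begin

lemma sigma_graded: "graded_map {1,2,3,4} c \<sigma>"
  using aut unfolding wps_aut_def by blast

lemma sigma_component: "i \<in> {1,2,3,4} \<Longrightarrow> wt_hom_poly {1,2,3,4} c (c i) (\<lambda>x. \<sigma> x i)"
  using sigma_graded unfolding graded_map_def by blast

lemma sigma_at_zero: "\<sigma> (\<lambda>_. 0) i = 0"
proof (cases "i \<in> {1,2,3,4}")
  case True
  then show ?thesis
    using pos by (intro wt_hom_poly_vanishes[OF sigma_component]) auto
next
  case False
  then show ?thesis
    using graded_map_in_cone_pts[OF sigma_graded] unfolding cone_pts_def by blast
qed

lemma graded_map_indep_x1: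
  assumes "graded_map {1,2,3,4} c \<phi>" and "i \<in> {3,4}"
  shows "\<phi> (x(1 := 0)) i = \<phi> x i"
proof -
  have "wt_hom_poly {1,2,3,4} c (c i) (\<lambda>x. \<phi> x i)" and "c i < c 1"
    using assms c13 c14 unfolding graded_map_def by auto
  then show ?thesis
    using pos by (intro wt_hom_poly_indep_var[symmetric]) auto
qed

lemma cone_restrict_graded_map_indep_x1:
  assumes "graded_map {1,2,3,4} c \<phi>"
  shows "cone_restrict {3,4} (\<phi> (x(1 := 0))) = cone_restrict {3,4} (\<phi> x)"
  using graded_map_indep_x1[OF assms] unfolding cone_restrict_def by auto

lemma g2_sigma_indep_x1: "g2 (\<sigma> (x(1 := 0))) = g2 (\<sigma> x)"
  by (rule wt_hom_poly_cong[OF g2]) (rule graded_map_indep_x1[OF sigma_graded])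

lemma x1_coefficients:
  obtains \<alpha> \<beta> where "\<forall>x. \<sigma> x 1 = \<sigma> (x(1 := 0)) 1 + \<alpha> * x 1"
    and "\<forall>x. \<sigma> x 2 = \<sigma> (x(1 := 0)) 2 + \<beta> * x 1"
    and "c 2 < c 1 \<longrightarrow> \<beta> = 0" and "\<alpha> * \<beta> = 0"
proof -
  obtain \<alpha> where \<alpha>: "\<forall>x. \<sigma> x 1 = \<sigma> (x(1 := 0)) 1 + \<alpha> * x 1"
    using wt_hom_poly_affine_in_var[OF sigma_component[of 1]] pos by auto
  obtain \<beta> where \<beta>: "\<forall>x. \<sigma> x 2 = \<sigma> (x(1 := 0)) 2 + \<beta> * x 1" and "c 2 < c 1 \<longrightarrow> \<beta> = 0"
    using wt_hom_poly_affine_in_var[OF sigma_component[of 2], of 1] pos c12 by auto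
  moreover have "\<alpha> * \<beta> = 0"
  proof -
    let ?e = "(\<lambda>_ :: nat. 0 :: complex)(1 := 1)"
    have e_cone: "?e \<in> cone_pts {1,2,3,4}"
      unfolding cone_pts_def by simp
    have "g1 ?e = 0"
      using pos by (intro wt_hom_poly_vanishes[OF g1]) auto
    moreover have e0: "?e(1 := 0) = (\<lambda>_. 0)"
      by (simp add: fun_eq_iff)
    moreover have "g2 (\<sigma> ?e) = 0"
    proof -
      have "g2 (\<sigma> ?e) = g2 (\<sigma> (?e(1 := 0)))"
        by (rule g2_sigma_indep_x1[symmetric])
      also have "\<dots> = 0"
        unfolding e0 using pos by (intro wt_hom_poly_vanishes[OF g2]) (auto simp: sigma_at_zero)
      finally show ?thesis .
    qed
    moreover have "\<sigma> ?e 1 = \<alpha>" and "\<sigma> ?e 2 = \<beta>"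
      using \<alpha>[rule_format, of ?e] \<beta>[rule_format, of ?e] e0 sigma_at_zero by simp_all
    ultimately show ?thesis
      using iso[rule_format, OF e_cone] by simp
  qed
  ultimately show ?thesis
    using \<alpha> that by blast
qed

lemma hypersurface_iso_swap_12:
  assumes "c 1 = c 2"
  shows "hypersurface_iso c g1 g2 (\<lambda>x. \<sigma> x \<circ> Transposition.transpose 1 2)"
proof
  show "wps_aut {1,2,3,4} c (\<lambda>x. \<sigma> x \<circ> Transposition.transpose 1 2)"
    using assms by (intro wps_aut_permute[OF aut]) (auto simp: transpose_def)
  show "\<forall>x\<in>cone_pts {1,2,3,4}. (x 1 * x 2 + g1 x = 0) \<longleftrightarrow>
      (\<sigma> x \<circ> Transposition.transpose 1 2) 1 * (\<sigma> x \<circ> Transposition.transpose 1 2) 2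
        + g2 (\<sigma> x \<circ> Transposition.transpose 1 2) = 0"
  proof
    fix x assume "x \<in> cone_pts {1,2,3,4}"
    moreover have "g2 (\<sigma> x \<circ> Transposition.transpose 1 2) = g2 (\<sigma> x)"
      by (rule wt_hom_poly_cong[OF g2]) auto
    ultimately show "(x 1 * x 2 + g1 x = 0) \<longleftrightarrow>
      (\<sigma> x \<circ> Transposition.transpose 1 2) 1 * (\<sigma> x \<circ> Transposition.transpose 1 2) 2
        + g2 (\<sigma> x \<circ> Transposition.transpose 1 2) = 0"
      using iso by (simp add: mult.commute)
  qed
qed (use pos c12 c13 c14 g1 g2 in auto)

end

locale hypersurface_iso_x1_triangular = hypersurface_iso +
  fixes \<alpha> :: complex
  assumes sigma1_affine_x1: "\<sigma> x 1 = \<sigma> (x(1 := 0)) 1 + \<alpha> * x 1"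
    and sigma2_indep_x1: "\<sigma> x 2 = \<sigma> (x(1 := 0)) 2"
begin

lemma iso_x1:
  assumes "x \<in> cone_pts {1,2,3,4}"
  shows "t * x 2 + g1 x = 0 \<longleftrightarrow>
    (\<sigma> (x(1 := 0)) 1 + \<alpha> * t) * \<sigma> (x(1 := 0)) 2 + g2 (\<sigma> (x(1 := 0))) = 0"
proof -
  have "x(1 := t) \<in> cone_pts {1,2,3,4}"
    using assms by (rule cone_pts_fun_upd) simp
  then have "(x(1 := t)) 1 * (x(1 := t)) 2 + g1 (x(1 := t)) = 0 \<longleftrightarrow>
      \<sigma> (x(1 := t)) 1 * \<sigma> (x(1 := t)) 2 + g2 (\<sigma> (x(1 := t))) = 0"
    using iso by blast
  moreover have "g1 (x(1 := t)) = g1 x"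
    by (rule wt_hom_poly_cong[OF g1]) auto
  moreover have "\<sigma> (x(1 := t)) 1 = \<sigma> (x(1 := 0)) 1 + \<alpha> * t"
    using sigma1_affine_x1[of "x(1 := t)"] by simp
  moreover have "\<sigma> (x(1 := t)) 2 = \<sigma> (x(1 := 0)) 2"
    using sigma2_indep_x1[of "x(1 := t)"] by simp
  moreover have "g2 (\<sigma> (x(1 := t))) = g2 (\<sigma> (x(1 := 0)))"
    using g2_sigma_indep_x1[of "x(1 := t)"] by simp
  ultimately show ?thesis
    by (simp add: mult.commute)
qed

lemma alpha_nonzero: "\<alpha> \<noteq> 0"
proof
  assume "\<alpha> = 0"
  define z :: "nat \<Rightarrow> complex" where "z = (\<lambda>_. 0)"
  have z1: "(z(1 := 1))(1 := 0) = z"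
    by (simp add: z_def fun_eq_iff)
  have "\<sigma> (z(1 := 1)) = \<sigma> z"
  proof
    fix i :: nat
    consider "i = 1" | "i = 2" | "i \<in> {3,4}" | "i \<notin> {1,2,3,4}"
      by auto
    then show "\<sigma> (z(1 := 1)) i = \<sigma> z i"
    proof cases
      case 1
      have "\<sigma> (z(1 := 1)) 1 = \<sigma> ((z(1 := 1))(1 := 0)) 1 + \<alpha> * (z(1 := 1)) 1"
        by (rule sigma1_affine_x1)
      then show ?thesis
        unfolding z1 using 1 \<open>\<alpha> = 0\<close> by simp
    next
      case 2
      have "\<sigma> (z(1 := 1)) 2 = \<sigma> ((z(1 := 1))(1 := 0)) 2"
        by (rule sigma2_indep_x1)
      then show ?thesis
        unfolding z1 using 2 by simp
    next
      case 3
      have "\<sigma> ((z(1 := 1))(1 := 0)) i = \<sigma> (z(1 := 1)) i"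
        by (rule graded_map_indep_x1[OF sigma_graded 3])
      then show ?thesis
        unfolding z1 by simp
    next
      case 4
      then show ?thesis
        using graded_map_in_cone_pts[OF sigma_graded, of "z(1 := 1)"]
          graded_map_in_cone_pts[OF sigma_graded, of z]
        unfolding cone_pts_def by simp
    qed
  qed
  moreover have "z(1 := 1) \<in> cone_pts {1,2,3,4}" and "z \<in> cone_pts {1,2,3,4}"
    unfolding z_def cone_pts_def by simp_all
  ultimately have "z(1 := 1) = z"
    by (rule inj_onD[OF wps_aut_inj_on[OF aut]])
  then have "(z(1 := 1)) 1 = z 1"
    by simp
  then show False
    by (simp add: z_def)
qed

lemma sigma2_vanishes_if_x2_zero:
  assumes "x \<in> cone_pts {1,2,3,4}" and "x 2 = 0"
  shows "\<sigma> (x(1 := 0)) 2 = 0"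
proof -
  let ?y = "x(1 := 0)"
  have "(\<alpha> * \<sigma> ?y 2) * t + (\<sigma> ?y 1 * \<sigma> ?y 2 + g2 (\<sigma> ?y)) = 0 \<longleftrightarrow> g1 x = 0" for t
    using iso_x1[OF assms(1), of t] assms(2) by (simp add: algebra_simps)
  then have "\<alpha> * \<sigma> ?y 2 = 0"
    by (rule slope_eq_0_if_zero_set_const)
  then show ?thesis
    using alpha_nonzero by simp
qed

definition \<beta> :: complex where
  "\<beta> = \<sigma> ((\<lambda>_. 0)(2 := 1)) 2"

lemma sigma2_eq:
  assumes "x \<in> cone_pts {1,2,3,4}"
  shows "\<sigma> x 2 = \<beta> * x 2"
proof -
  obtain b where b: "\<forall>x. \<sigma> x 2 = \<sigma> (x(2 := 0)) 2 + b * x 2"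
    using wt_hom_poly_affine_in_var[OF sigma_component[of 2]] pos by auto
  have linear: "\<sigma> y 2 = b * y 2" if "y \<in> cone_pts {1,2,3,4}" for y
  proof -
    have "\<sigma> (y(2 := 0)) 2 = \<sigma> (y(2 := 0, 1 := 0)) 2"
      by (rule sigma2_indep_x1)
    also have "\<dots> = 0"
      using cone_pts_fun_upd[OF that, of 2 0] by (intro sigma2_vanishes_if_x2_zero) auto
    finally show ?thesis
      using b[rule_format, of y] by simp
  qed
  have "\<beta> = b"
    using linear[of "(\<lambda>_. 0)(2 := 1)"] unfolding \<beta>_def cone_pts_def by simp
  then show ?thesis
    using linear[OF assms] by simp
qed

lemma beta_nonzero: "\<beta> \<noteq> 0"
proof
  assume "\<beta> = 0"
  let ?e = "(\<lambda>_ :: nat. 0 :: complex)(2 := 1)"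
  have e_cone: "?e \<in> cone_pts {1,2,3,4}" and e1: "?e(1 := 0) = ?e"
    unfolding cone_pts_def by (auto simp: fun_eq_iff)
  have "1 * t + g1 ?e = 0 \<longleftrightarrow> g2 (\<sigma> ?e) = 0" for t
    using iso_x1[OF e_cone, of t] sigma2_eq[OF e_cone] \<open>\<beta> = 0\<close> e1 by simp
  then have "(1 :: complex) = 0"
    by (rule slope_eq_0_if_zero_set_const)
  then show False
    by simp
qed

lemma g2_sigma_if_x2_nonzero:
  assumes "x \<in> cone_pts {1,2,3,4}" and "x 2 \<noteq> 0"
  shows "g2 (\<sigma> (x(1 := 0))) = \<alpha> * \<beta> * g1 x - \<beta> * x 2 * \<sigma> (x(1 := 0)) 1"
proof -
  let ?y = "x(1 := 0)" and ?t = "- g1 x / x 2"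
  have "\<sigma> ?y 2 = \<beta> * x 2"
    using sigma2_eq[OF cone_pts_fun_upd[OF assms(1)]] by simp
  moreover have "?t * x 2 + g1 x = 0"
    using assms(2) by simp
  ultimately have "(\<sigma> ?y 1 + \<alpha> * ?t) * (\<beta> * x 2) + g2 (\<sigma> ?y) = 0"
    using iso_x1[OF assms(1), of ?t] by simp
  moreover have "(\<sigma> ?y 1 + \<alpha> * ?t) * (\<beta> * x 2) = \<beta> * x 2 * \<sigma> ?y 1 - \<alpha> * \<beta> * g1 x"
    using assms(2) by (simp add: field_simps)
  ultimately show ?thesis
    by (simp add: algebra_simps)
qed

lemma g2_sigma_cone_restrict: "g2 (\<sigma> (cone_restrict {3,4} x)) = \<alpha> * \<beta> * g1 x"
proof -
  let ?y = "cone_restrict {3,4} x"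
  define \<phi> where "\<phi> t = g2 (\<sigma> (?y(2 := t))) + \<beta> * t * \<sigma> (?y(2 := t)) 1" for t
  have "\<phi> t = \<alpha> * \<beta> * g1 x" if "t \<noteq> 0" for t
  proof -
    have "?y(2 := t) \<in> cone_pts {1,2,3,4}"
      by (intro cone_pts_fun_upd cone_restrict_in_cone_pts) auto
    moreover have "(?y(2 := t))(1 := 0) = ?y(2 := t)"
      by (simp add: cone_restrict_def fun_eq_iff)
    moreover have "g1 (?y(2 := t)) = g1 x"
      by (rule wt_hom_poly_cong[OF g1]) (auto simp: cone_restrict_def)
    ultimately show ?thesis
      using g2_sigma_if_x2_nonzero[of "?y(2 := t)"] that unfolding \<phi>_def by simp
  qed
  moreover have "continuous (at 0) \<phi>"
  proof -
    have upd: "continuous (at 0) (\<lambda>t. (?y(2 := t)) j)" for j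
      by (cases "j = 2") simp_all
    have sigma: "continuous (at 0) (\<lambda>t. \<sigma> (?y(2 := t)) i)" if "i \<in> {1,2,3,4}" for i
      by (rule continuous_wt_hom_poly[OF sigma_component[OF that] upd])
    have "continuous (at 0) (\<lambda>t. g2 (\<sigma> (?y(2 := t))))"
      by (rule continuous_wt_hom_poly[OF g2 sigma]) auto
    then show ?thesis
      unfolding \<phi>_def by (intro continuous_intros sigma) auto
  qed
  ultimately have "\<phi> 0 = \<alpha> * \<beta> * g1 x"
    by (rule continuous_at_imp_eq_if_eq_off_point[rotated])
  moreover have "?y(2 := 0) = ?y"
    by (simp add: cone_restrict_def fun_eq_iff)
  ultimately show ?thesis
    unfolding \<phi>_def by simp
qed

lemma cone_restrict_34_eq_if_x2_zero:
  assumes "x \<in> cone_pts {1,2,3,4}" and "x 2 = 0"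
  shows "cone_restrict {3,4} x = x(1 := 0)"
  using assms unfolding cone_restrict_def cone_pts_def by (auto simp: fun_eq_iff)

lemma wps_aut_cone_restrict:
  "wps_aut {3,4} c (\<lambda>x. cone_restrict {3,4} (\<sigma> (cone_restrict {3,4} x)))"
proof -
  obtain \<psi> where \<psi>: "graded_map {1,2,3,4} c \<psi>"
    and \<psi>\<sigma>: "\<forall>x\<in>cone_pts {1,2,3,4}. \<psi> (\<sigma> x) = x \<and> \<sigma> (\<psi> x) = x"
    using aut unfolding wps_aut_def by blast
  let ?r = "cone_restrict {3,4}"
  have graded: "graded_map {3,4} c (\<lambda>x. ?r (\<phi> (?r x)))" if "graded_map {1,2,3,4} c \<phi>" for \<phi>
    using that wt_hom_poly_cone_restrict[of "{1,2,3,4}" c _ _ "{3,4}"]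
    unfolding graded_map_def by (auto simp: cone_restrict_def)
  have restrict_idem: "?r (?r x) = ?r x" for x
    by (simp add: cone_restrict_def fun_eq_iff)
  have cone_34: "x \<in> cone_pts {1,2,3,4}" "?r x = x" if "x \<in> cone_pts {3,4}" for x
    using that unfolding cone_pts_def cone_restrict_def by auto
  txt \<open>Both \<sigma> and \<psi> keep the hyperplane x2 = 0 (as \<sigma>2 = \<beta> s2 with \<beta> \<noteq> 0), on which the
    restriction to s3, s4 only forgets s1, and their s3- and s4-components ignore s1.\<close>
  have "?r (\<psi> (?r (?r (\<sigma> (?r x))))) = x" if "x \<in> cone_pts {3,4}" for x
  proof -
    have "\<sigma> x 2 = 0"
      using sigma2_eq cone_34[OF that] that unfolding cone_pts_def by simp
    then have \<sigma>x: "?r (\<sigma> x) = (\<sigma> x)(1 := 0)"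
      by (intro cone_restrict_34_eq_if_x2_zero graded_map_in_cone_pts[OF sigma_graded])
    have "?r (\<psi> (?r (?r (\<sigma> (?r x))))) = ?r (\<psi> ((\<sigma> x)(1 := 0)))"
      by (simp only: restrict_idem cone_34(2)[OF that]) (simp only: \<sigma>x)
    also have "\<dots> = ?r (\<psi> (\<sigma> x))"
      by (rule cone_restrict_graded_map_indep_x1[OF \<psi>])
    finally show ?thesis
      using \<psi>\<sigma> cone_34[OF that] by simp
  qed
  moreover have "?r (\<sigma> (?r (?r (\<psi> (?r y))))) = y" if "y \<in> cone_pts {3,4}" for y
  proof -
    have "\<sigma> (\<psi> y) = y"
      using \<psi>\<sigma> cone_34(1)[OF that] by blast
    moreover have "y 2 = 0"
      using that unfolding cone_pts_def by simp
    ultimately have "\<beta> * \<psi> y 2 = 0"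
      using sigma2_eq[OF graded_map_in_cone_pts[OF \<psi>], of y] by simp
    then have \<psi>y: "?r (\<psi> y) = (\<psi> y)(1 := 0)"
      using beta_nonzero
      by (intro cone_restrict_34_eq_if_x2_zero graded_map_in_cone_pts[OF \<psi>]) simp
    have "?r (\<sigma> (?r (?r (\<psi> (?r y))))) = ?r (\<sigma> ((\<psi> y)(1 := 0)))"
      by (simp only: restrict_idem cone_34(2)[OF that]) (simp only: \<psi>y)
    also have "\<dots> = ?r (\<sigma> (\<psi> y))"
      by (rule cone_restrict_graded_map_indep_x1[OF sigma_graded])
    finally show ?thesis
      using \<psi>\<sigma> cone_34[OF that] by simp
  qed
  ultimately show ?thesis
    unfolding wps_aut_def using graded[OF sigma_graded] graded[OF \<psi>] by blast
qed

lemma wps_aut_pullback_triangular: "\<exists>\<tau>. wps_aut {3,4} c \<tau> \<and> (\<forall>x. g1 x = g2 (\<tau> x))"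
proof -
  have "0 < c 1 + c 2"
    using pos by simp
  moreover obtain t where t: "t ^ (c 1 + c 2) = inverse (\<alpha> * \<beta>)"
    using complex_root_exists[OF calculation] .
  ultimately have "t \<noteq> 0"
    using alpha_nonzero beta_nonzero by (auto simp: power_0_left)
  define \<tau> where "\<tau> x = (\<lambda>i. t ^ c i * cone_restrict {3,4} (\<sigma> (cone_restrict {3,4} x)) i)" for x
  have "wps_aut {3,4} c \<tau>"
    unfolding \<tau>_def using wps_aut_cone_restrict \<open>t \<noteq> 0\<close> by (intro wps_aut_weighted_scale) auto
  moreover have "g2 (\<tau> x) = g1 x" for x
  proof -
    have "g2 (\<tau> x) = t ^ (c 1 + c 2) * g2 (cone_restrict {3,4} (\<sigma> (cone_restrict {3,4} x)))"
      unfolding \<tau>_def by (rule wt_hom_poly_weighted_scale[OF g2]) simp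
    also have "g2 (cone_restrict {3,4} (\<sigma> (cone_restrict {3,4} x)))
        = g2 (\<sigma> (cone_restrict {3,4} x))"
      by (rule wt_hom_poly_cong[OF g2]) (simp add: cone_restrict_def)
    also have "\<dots> = \<alpha> * \<beta> * g1 x"
      by (rule g2_sigma_cone_restrict)
    also note t
    finally show ?thesis
      using alpha_nonzero beta_nonzero by (simp add: field_simps)
  qed
  ultimately show ?thesis
    by auto
qed

end

lemma (in hypersurface_iso) wps_aut_pullback: "\<exists>\<tau>. wps_aut {3,4} c \<tau> \<and> (\<forall>x. g1 x = g2 (\<tau> x))"
proof -
  obtain \<alpha> \<beta> where \<alpha>: "\<forall>x. \<sigma> x 1 = \<sigma> (x(1 := 0)) 1 + \<alpha> * x 1"
    and \<beta>: "\<forall>x. \<sigma> x 2 = \<sigma> (x(1 := 0)) 2 + \<beta> * x 1"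
    and "c 2 < c 1 \<longrightarrow> \<beta> = 0" and "\<alpha> * \<beta> = 0"
    by (rule x1_coefficients)
  then consider "\<beta> = 0" | "\<alpha> = 0" and "c 1 = c 2"
    using c12 by fastforce
  then show ?thesis
  proof cases
    case 1
    interpret hypersurface_iso_x1_triangular c g1 g2 \<sigma> \<alpha>
    proof unfold_locales
      fix x
      show "\<sigma> x 1 = \<sigma> (x(1 := 0)) 1 + \<alpha> * x 1"
        using \<alpha> by blast
      show "\<sigma> x 2 = \<sigma> (x(1 := 0)) 2"
        using \<beta>[rule_format, of x] 1 by simp
    qed
    show ?thesis
      by (rule wps_aut_pullback_triangular)
  next
    case 2
    let ?\<sigma> = "\<lambda>x. \<sigma> x \<circ> Transposition.transpose 1 2"
    interpret swapped: hypersurface_iso c g1 g2 ?\<sigma>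
      using 2 by (intro hypersurface_iso_swap_12) simp
    interpret hypersurface_iso_x1_triangular c g1 g2 ?\<sigma> \<beta>
    proof unfold_locales
      fix x
      show "?\<sigma> x 1 = ?\<sigma> (x(1 := 0)) 1 + \<beta> * x 1"
        using \<beta>[rule_format, of x] by simp
      show "?\<sigma> x 2 = ?\<sigma> (x(1 := 0)) 2"
        using \<alpha>[rule_format, of x] 2 by simp
    qed
    show ?thesis
      by (rule wps_aut_pullback_triangular)
  qed
qed

theorem lemma3p1:
  fixes c :: "nat \<Rightarrow> nat"
    and g1 g2 :: "(nat \<Rightarrow> complex) \<Rightarrow> complex"
    and \<sigma> :: "(nat \<Rightarrow> complex) \<Rightarrow> (nat \<Rightarrow> complex)"
  assumes pos: "\<forall>i\<in>{1,2,3,4}. c i > 0"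
    and c12: "c 1 \<ge> c 2" and c13: "c 1 > c 3" and c14: "c 1 > c 4"
    and g1: "wt_hom_poly {3,4} c (c 1 + c 2) g1"
    and g2: "wt_hom_poly {3,4} c (c 1 + c 2) g2"
    and \<sigma>: "wps_aut {1,2,3,4} c \<sigma>"
    and iso: "\<forall>x\<in>cone_pts {1,2,3,4}.
               (x 1 * x 2 + g1 x = 0) \<longleftrightarrow> ((\<sigma> x) 1 * (\<sigma> x) 2 + g2 (\<sigma> x) = 0)"
  shows "\<exists>\<tau>. wps_aut {3,4} c \<tau> \<and> (\<forall>x. g1 x = g2 (\<tau> x))"
  by (rule hypersurface_iso.wps_aut_pullback) (use assms in unfold_locales)

end
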